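(* Let $\lambda>1$, $A=\mathrm{diag}(1,\lambda)$, and $f(x)=\tfrac12 x^TAx$ on $\mathbb{R}^2$, with gradient $g(x)=Ax$. Consider the iteration $x_{k+1}=x_k-\alpha_kg_k$, $g_k=Ax_k$, where $x_1\in\mathbb{R}^2$, $x_2=x_1-\alpha_1g_1$ for some $\alpha_1>0$, and for $k\ge 2$ $$\alpha_k=\gamma_k\frac{s_{k-1}^Ts_{k-1}}{s_{k-1}^Ty_{k-1}}+(1-\gamma_k)\frac{s_{k-1}^Ty_{k-1}}{y_{k-1}^Ty_{k-1}},\qquad s_{k-1}=x_k-x_{k-1},\ y_{k-1}=g_k-g_{k-1},$$ with $\gamma_k\in(0,1)$ for all $k$. Assume $g_1^{(i)}\neq0$ and $g_2^{(i)}\ne0$ for $i=1,2$. Let $q_k=(g_k^{(1)})^2/(g_k^{(2)})^2$, $M_k=\log q_k$, let $\theta$ be a root of $\theta^2-\theta+2=0$, and $\xi_k=M_k+(\theta-1)M_{k-1}$. If $|\xi_2|>8\log\lambda$, then there exists $c_1>0$ such that $$|\xi_k|\ge(\sqrt2-1)\,2^{k/2}c_1\quad\text{for all }k\ge 2.$$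
   Context: $g_k^{(i)}$ denotes the $i$-th component of $g_k$. Under these assumptions all $g_k^{(i)}$ remain nonzero, so $q_k$ and $M_k$ are well defined for all $k\ge1$; $\theta=\frac{1\pm\sqrt7\,i}{2}$ is complex and $|\cdot|$ is the complex modulus. *)

theory Defs
  imports "HOL-Analysis.Analysis"
begin

definition Adiag :: "real \<Rightarrow> real^2^2" where
  "Adiag lam = (\<chi> i j. if i = j then (if i = 1 then 1 else lam) else 0)"

definition qratio :: "real^2 \<Rightarrow> real" where
  "qratio g = (g $ 1)^2 / (g $ 2)^2"

definition Mlog :: "real^2 \<Rightarrow> real" where
  "Mlog g = ln (qratio g)"

end

theory Submission
  imports Defs
begin

text \<open>
  Each step multiplies the two gradient components by 1 - alpha_k and 1 - lam alpha_k, and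
  alpha_k depends only on q_(k-1).  Factoring these two numbers shows
  M_(k+1) = M_k - 2 M_(k-1) + delta_k with |delta_k| \<le> 2 log lam.  As theta (theta - 1) = -2,
  this reads xi_(k+1) = theta xi_k + delta_k with |theta| = sqrt 2, hence
  |xi_(k+1)| \<ge> sqrt 2 |xi_k| - 2 log lam; once |xi_2| exceeds the fixed point
  2 log lam / (sqrt 2 - 1) of this affine bound, |xi_k| grows like 2^(k/2).
\<close>

lemma Adiag_mult_vec_nth:
  fixes v :: "real^2"
  shows "(Adiag lam *v v) $ 1 = v $ 1" "(Adiag lam *v v) $ 2 = lam * v $ 2"
  by (simp_all add: Adiag_def matrix_vector_mult_def sum_2)

lemma inner_vec2:
  fixes u v :: "real^2"
  shows "u \<bullet> v = u$1 * v$1 + u$2 * v$2"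
  by (simp add: inner_vec_def sum_2)

text \<open>
  The step size alpha_k as a function of the previous gradient (a, b) = g_(k-1): since
  s_(k-1) = -alpha_(k-1) g_(k-1) and y_(k-1) = A s_(k-1), the scale alpha_(k-1) cancels in
  both Barzilai-Borwein quotients.
\<close>
definition convex_bb_step :: "real \<Rightarrow> real \<Rightarrow> real \<Rightarrow> real \<Rightarrow> real" where
  "convex_bb_step lam ga a b =
     ga * ((a^2+b^2)/(a^2+lam*b^2)) + (1-ga) * ((a^2+lam*b^2)/(a^2+lam^2*b^2))"

lemma convex_bb_step_factors:
  fixes a b lam ga al :: real
  assumes lam: "lam > 1" and a: "a \<noteq> 0" and b: "b \<noteq> 0" and ga: "0 < ga" "ga < 1"
    and al: "al = convex_bb_step lam ga a b"
  shows "al > 0" "1 - al \<noteq> 0" "1 - lam*al \<noteq> 0"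
    and "\<exists>U V. 0 < V \<and> V < U \<and> U < lam * V
           \<and> 1 - al = (lam-1)*b^2*U \<and> 1 - lam*al = -((lam-1)*a^2*V)"
proof -
  define P where "P = a^2+lam*b^2"
  define Q where "Q = a^2+lam^2*b^2"
  have a2: "a^2 > 0" and b2: "b^2 > 0" using a b by simp_all
  have P: "P > 0" and Q: "Q > 0" unfolding P_def Q_def using a2 b2 lam by (simp_all add: add_pos_pos)
  have al': "al = ga * ((a^2+b^2)/P) + (1-ga) * (P/Q)" unfolding al convex_bb_step_def P_def Q_def ..
  show "al > 0" unfolding al' using P Q ga a2 b2
    by (intro add_pos_pos mult_pos_pos divide_pos_pos) auto
  define U where "U = ga/P + (1-ga)*lam/Q"
  define V where "V = ga/P + (1-ga)/Q"
  have V: "V > 0" unfolding V_def using P Q ga by (simp add: add_pos_pos)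
  have UV: "V < U" unfolding U_def V_def using P Q ga lam by (simp add: divide_strict_right_mono)
  have UV': "U < lam * V" unfolding U_def V_def using P Q ga lam
    by (simp add: algebra_simps divide_strict_right_mono)
  have e1: "1 - al = (lam-1)*b^2*U"
  proof -
    have ratios: "(a^2+b^2)/P = 1 - (lam-1)*b^2/P" "P/Q = 1 - lam*(lam-1)*b^2/Q"
      using P Q unfolding P_def Q_def by (simp_all add: field_simps power2_eq_square)
    have "1 - al = ga * (1 - (a^2+b^2)/P) + (1-ga) * (1 - P/Q)"
      unfolding al' by (simp add: algebra_simps)
    also have "\<dots> = ga * ((lam-1)*b^2/P) + (1-ga) * (lam*(lam-1)*b^2/Q)"
      unfolding ratios by simp
    also have "\<dots> = (lam-1)*b^2*U" unfolding U_def using P Q by (simp add: field_simps)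
    finally show ?thesis .
  qed
  have e2: "1 - lam*al = -((lam-1)*a^2*V)"
  proof -
    have ratios: "lam*((a^2+b^2)/P) = 1 + (lam-1)*a^2/P" "lam*(P/Q) = 1 + (lam-1)*a^2/Q"
      using P Q unfolding P_def Q_def by (simp_all add: field_simps power2_eq_square)
    have "1 - lam*al = ga * (1 - lam*((a^2+b^2)/P)) + (1-ga) * (1 - lam*(P/Q))"
      unfolding al' by (simp add: algebra_simps)
    also have "\<dots> = - (ga * ((lam-1)*a^2/P) + (1-ga) * ((lam-1)*a^2/Q))"
      unfolding ratios by (simp add: algebra_simps)
    also have "\<dots> = -((lam-1)*a^2*V)" unfolding V_def using P Q by (simp add: field_simps)
    finally show ?thesis .
  qed
  show "1 - al \<noteq> 0" "1 - lam*al \<noteq> 0" using lam a2 b2 V UV e1 e2 by simp_all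
  show "\<exists>U V. 0 < V \<and> V < U \<and> U < lam * V
           \<and> 1 - al = (lam-1)*b^2*U \<and> 1 - lam*al = -((lam-1)*a^2*V)"
    using V UV UV' e1 e2 by blast
qed

lemma ln_sq_ratio_convex_bb_step:
  fixes a b c d lam ga al :: real
  assumes lam: "lam > 1" and a: "a \<noteq> 0" and b: "b \<noteq> 0" and c: "c \<noteq> 0" and d: "d \<noteq> 0"
    and ga: "0 < ga" "ga < 1"
    and al: "al = convex_bb_step lam ga a b"
  shows "\<bar>ln (((1-al)*c)^2/((1-lam*al)*d)^2) - ln (c^2/d^2) + 2 * ln (a^2/b^2)\<bar> \<le> 2 * ln lam"
proof -
  obtain U V where V: "0 < V" and UV: "V < U" "U < lam * V"
    and e1: "1 - al = (lam-1)*b^2*U" and e2: "1 - lam*al = -((lam-1)*a^2*V)"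
    using convex_bb_step_factors(4)[OF lam a b ga al] by blast
  have U: "U > 0" using V UV by simp
  have "((t*b^2*U)*c)^2/((-(t*a^2*V))*d)^2 = (c^2/d^2) * ((U/V)^2 / (a^2/b^2)^2)" if "t \<noteq> 0" for t
    using that a b c d V by (simp add: field_simps)
  then have "((1-al)*c)^2/((1-lam*al)*d)^2 = (c^2/d^2) * ((U/V)^2 / (a^2/b^2)^2)"
    unfolding e1 e2 using lam by simp
  then have "ln (((1-al)*c)^2/((1-lam*al)*d)^2) - ln (c^2/d^2) + 2 * ln (a^2/b^2) = 2 * ln (U/V)"
    using a b c d U V by (simp add: ln_mult ln_div ln_realpow)
  moreover have "0 < ln (U/V)" "ln (U/V) < ln lam"
    using UV U V lam by (simp_all add: pos_divide_less_eq)
  ultimately show "\<bar>ln (((1-al)*c)^2/((1-lam*al)*d)^2) - ln (c^2/d^2) + 2 * ln (a^2/b^2)\<bar> \<le> 2 * ln lam"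
    by simp
qed

locale convex_bb_iteration =
  fixes lam :: real and x g :: "nat \<Rightarrow> real^2" and alpha gamma :: "nat \<Rightarrow> real"
  assumes lam: "lam > 1"
    and grad: "\<And>k. k \<ge> 1 \<Longrightarrow> g k = Adiag lam *v x k"
    and iter: "\<And>k. k \<ge> 1 \<Longrightarrow> x (Suc k) = x k - alpha k *\<^sub>R g k"
    and alpha1: "alpha 1 > 0"
    and gamma: "\<And>k. k \<ge> 2 \<Longrightarrow> 0 < gamma k \<and> gamma k < 1"
    and alphak: "\<And>k. k \<ge> 2 \<Longrightarrow>
       alpha k = gamma k * (((x k - x (k-1)) \<bullet> (x k - x (k-1))) / ((x k - x (k-1)) \<bullet> (g k - g (k-1))))
               + (1 - gamma k) * (((x k - x (k-1)) \<bullet> (g k - g (k-1))) / ((g k - g (k-1)) \<bullet> (g k - g (k-1))))"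
    and nz: "\<And>i. g 1 $ i \<noteq> 0" "\<And>i. g 2 $ i \<noteq> 0"
begin

lemma grad_Suc_nth:
  assumes "k \<ge> 1"
  shows "g (Suc k) $ 1 = (1 - alpha k) * g k $ 1" "g (Suc k) $ 2 = (1 - lam * alpha k) * g k $ 2"
proof -
  have "g k $ 1 = x k $ 1" "g (Suc k) $ 1 = x (Suc k) $ 1"
    "g k $ 2 = lam * x k $ 2" "g (Suc k) $ 2 = lam * x (Suc k) $ 2"
    using grad[OF assms] grad[of "Suc k"] assms by (simp_all add: Adiag_mult_vec_nth)
  then show "g (Suc k) $ 1 = (1 - alpha k) * g k $ 1" "g (Suc k) $ 2 = (1 - lam * alpha k) * g k $ 2"
    using iter[OF assms] by (simp_all add: algebra_simps)
qed

lemma alpha_eq_convex_bb_step: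
  assumes k: "k \<ge> 2" and "alpha (k-1) \<noteq> 0"
  shows "alpha k = convex_bb_step lam (gamma k) (g (k-1) $ 1) (g (k-1) $ 2)"
proof -
  define a where "a = g (k-1) $ 1"
  define b where "b = g (k-1) $ 2"
  define be where "be = alpha (k-1)"
  have k1: "k - 1 \<ge> 1" and kk: "Suc (k-1) = k" using k by auto
  have s: "(x k - x (k-1)) $ 1 = - be * a" "(x k - x (k-1)) $ 2 = - be * b"
    using iter[OF k1] unfolding kk be_def a_def b_def by auto
  have y: "(g k - g (k-1)) $ 1 = - be * a" "(g k - g (k-1)) $ 2 = - be * lam * b"
    using grad_Suc_nth[OF k1] unfolding kk be_def a_def b_def by (auto simp: algebra_simps)
  have "alpha k = gamma k * ((be^2*(a^2+b^2))/(be^2*(a^2+lam*b^2)))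
                + (1-gamma k) * ((be^2*(a^2+lam*b^2))/(be^2*(a^2+lam^2*b^2)))"
    unfolding alphak[OF k] inner_vec2 s y by (simp add: algebra_simps power2_eq_square)
  then show ?thesis using assms(2) unfolding convex_bb_step_def a_def b_def be_def by simp
qed

lemma grad_nth_nonzero_alpha_pos:
  assumes "k \<ge> 2"
  shows "g (k-1) $ 1 \<noteq> 0 \<and> g (k-1) $ 2 \<noteq> 0 \<and> g k $ 1 \<noteq> 0 \<and> g k $ 2 \<noteq> 0 \<and> alpha (k-1) > 0"
  using assms
proof (induction k rule: dec_induct)
  case base
  then show ?case using nz alpha1 by simp
next
  case (step k)
  note al = alpha_eq_convex_bb_step[OF step(1)]
  have "k \<ge> 1" and ga: "0 < gamma k" "gamma k < 1" using step(1) gamma[OF step(1)] by auto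
  then show ?case
    using step(3) convex_bb_step_factors(1-3)[OF lam _ _ ga al]
    by (simp add: grad_Suc_nth)
qed

lemma Mlog_recurrence:
  assumes k: "k \<ge> 2"
  shows "\<bar>Mlog (g (Suc k)) - Mlog (g k) + 2 * Mlog (g (k-1))\<bar> \<le> 2 * ln lam"
proof -
  note nonzero = grad_nth_nonzero_alpha_pos[OF k]
  have "k \<ge> 1" and ga: "0 < gamma k" "gamma k < 1" using k gamma[OF k] by auto
  then show ?thesis
    using ln_sq_ratio_convex_bb_step[OF lam _ _ _ _ ga alpha_eq_convex_bb_step[OF k]] nonzero
    unfolding Mlog_def qratio_def by (simp add: grad_Suc_nth)
qed

end

lemma cmod_root_eq_sqrt2:
  fixes theta :: complex
  assumes theta: "theta^2 - theta + 2 = 0"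
  shows "cmod theta = sqrt 2"
proof -
  have re: "(Re theta)^2 - (Im theta)^2 - Re theta + 2 = 0"
    and im: "Im theta * (2 * Re theta - 1) = 0"
    using arg_cong[OF theta, of Re] arg_cong[OF theta, of Im]
    by (simp_all add: power2_eq_square algebra_simps)
  have "Im theta \<noteq> 0"
  proof
    assume "Im theta = 0"
    with re have "(Re theta - 1/2)^2 + 7/4 = 0" by (simp add: power2_eq_square algebra_simps)
    moreover have "(Re theta - 1/2)^2 + 7/4 > 0" by (simp add: add_nonneg_pos)
    ultimately show False by simp
  qed
  with im have re_half: "Re theta = 1/2" by simp
  have "(Im theta)^2 = 7/4" using re[unfolded re_half] by (simp add: power2_eq_square)
  then have "(cmod theta)^2 = 2" unfolding cmod_power2 re_half by (simp add: power2_eq_square)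
  then show ?thesis by (metis norm_ge_zero real_sqrt_unique)
qed

lemma cmod_xi_step:
  fixes theta :: complex and a b c :: real
  assumes theta: "theta^2 - theta + 2 = 0"
  shows "cmod (of_real c + (theta - 1) * of_real b)
           \<ge> sqrt 2 * cmod (of_real b + (theta - 1) * of_real a) - \<bar>c - b + 2 * a\<bar>"
proof -
  have "theta * (theta - 1) = -2" using theta by (simp add: algebra_simps power2_eq_square)
  then have "theta * (of_real b + (theta - 1) * of_real a) = theta * of_real b - 2 * of_real a"
    by (simp add: distrib_left mult.assoc[symmetric])
  then have xi: "of_real c + (theta - 1) * of_real b
        = theta * (of_real b + (theta - 1) * of_real a) + of_real (c - b + 2 * a)"
    by (simp add: algebra_simps)
  show ?thesis
    using norm_diff_ineq[of "theta * (of_real b + (theta - 1) * of_real a)" "of_real (c - b + 2 * a)"]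
    unfolding xi norm_mult norm_of_real cmod_root_eq_sqrt2[OF theta] .
qed

lemma affine_recurrence_lower_bound:
  fixes e :: "nat \<Rightarrow> real"
  assumes r: "r > 1" and rec: "\<And>k. k \<ge> n \<Longrightarrow> e (Suc k) \<ge> r * e k - c" and "k \<ge> n"
  shows "e k - c / (r - 1) \<ge> r ^ (k - n) * (e n - c / (r - 1))"
  using \<open>k \<ge> n\<close>
proof (induction k rule: dec_induct)
  case base
  then show ?case by simp
next
  case (step k)
  have "r ^ (Suc k - n) * (e n - c / (r - 1)) = r * (r ^ (k - n) * (e n - c / (r - 1)))"
    using step(1) by (simp add: Suc_diff_le)
  also have "\<dots> \<le> r * (e k - c / (r - 1))" using step(3) r by simp
  also have "\<dots> = r * e k - c - c / (r - 1)" using r by (simp add: field_simps)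
  also have "\<dots> \<le> e (Suc k) - c / (r - 1)" using rec[OF step(1)] by simp
  finally show ?case .
qed

lemma two_powr_half_eq:
  assumes "k \<ge> 2"
  shows "2 powr (real k / 2) = 2 * sqrt 2 ^ (k - 2)"
proof -
  have "2 powr (real k / 2) = sqrt 2 ^ k"
    by (simp add: powr_half_sqrt_powr powr_realpow real_sqrt_power)
  also have "\<dots> = sqrt 2 ^ 2 * sqrt 2 ^ (k - 2)"
    using assms by (simp only: power_add[symmetric] le_add_diff_inverse)
  finally show ?thesis by simp
qed

theorem lemma1:
  fixes lam :: real and x g :: "nat \<Rightarrow> real^2" and alpha gamma :: "nat \<Rightarrow> real"
    and theta :: complex
  assumes lam: "lam > 1"
    and grad: "\<And>k. k \<ge> 1 \<Longrightarrow> g k = Adiag lam *v x k"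
    and iter: "\<And>k. k \<ge> 1 \<Longrightarrow> x (Suc k) = x k - alpha k *\<^sub>R g k"
    and alpha1: "alpha 1 > 0"
    and gamma: "\<And>k. k \<ge> 2 \<Longrightarrow> 0 < gamma k \<and> gamma k < 1"
    and alphak: "\<And>k. k \<ge> 2 \<Longrightarrow>
       alpha k = gamma k * (((x k - x (k-1)) \<bullet> (x k - x (k-1))) / ((x k - x (k-1)) \<bullet> (g k - g (k-1))))
               + (1 - gamma k) * (((x k - x (k-1)) \<bullet> (g k - g (k-1))) / ((g k - g (k-1)) \<bullet> (g k - g (k-1))))"
    and nz: "\<And>i. g 1 $ i \<noteq> 0" "\<And>i. g 2 $ i \<noteq> 0"
    and theta: "theta^2 - theta + 2 = 0"
    and xi2: "cmod (complex_of_real (Mlog (g 2)) + (theta - 1) * complex_of_real (Mlog (g 1))) > 8 * ln lam"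
  shows "\<exists>c1>0. \<forall>k\<ge>2. cmod (complex_of_real (Mlog (g k)) + (theta - 1) * complex_of_real (Mlog (g (k-1))))
                         \<ge> (sqrt 2 - 1) * 2 powr (real k / 2) * c1"
proof -
  interpret convex_bb_iteration lam x g alpha gamma
    using assms by unfold_locales auto
  define e where "e k = cmod (of_real (Mlog (g k)) + (theta - 1) * of_real (Mlog (g (k-1))))" for k
  define F where "F = 2 * ln lam / (sqrt 2 - 1)"
  have rec: "e (Suc k) \<ge> sqrt 2 * e k - 2 * ln lam" if "k \<ge> 2" for k
    using cmod_xi_step[OF theta, where a = "Mlog (g (k-1))" and b = "Mlog (g k)" and c = "Mlog (g (Suc k))"]
      Mlog_recurrence[OF that] unfolding e_def by simp
  have s2: "5/4 \<le> sqrt 2" by (rule real_le_rsqrt) (simp add: power2_eq_square)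
  then have "0 \<le> F" "F \<le> 8 * ln lam" unfolding F_def using lam by (simp_all add: pos_divide_le_eq)
  with xi2 have F: "0 \<le> F" "F < e 2" unfolding e_def by simp_all
  have grow: "sqrt 2 ^ (k - 2) * (e 2 - F) \<le> e k - F" if "k \<ge> 2" for k
    using affine_recurrence_lower_bound[of "sqrt 2" 2 e "2 * ln lam", OF _ rec that] s2
    unfolding F_def by simp
  show ?thesis
  proof (intro exI conjI allI impI)
    show "(e 2 - F) / (2 * (sqrt 2 - 1)) > 0" using F s2 by simp
    fix k :: nat assume k: "k \<ge> 2"
    have "(sqrt 2 - 1) * 2 powr (real k / 2) * ((e 2 - F) / (2 * (sqrt 2 - 1)))
          = sqrt 2 ^ (k - 2) * (e 2 - F)"
      using two_powr_half_eq[OF k] s2 by (simp add: field_simps)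
    also have "\<dots> \<le> e k" using grow[OF k] F by simp
    finally show "(sqrt 2 - 1) * 2 powr (real k / 2) * ((e 2 - F) / (2 * (sqrt 2 - 1)))
        \<le> cmod (of_real (Mlog (g k)) + (theta - 1) * of_real (Mlog (g (k - 1))))"
      unfolding e_def .
  qed
qed

end
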